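(* Let $L\ge1$ be an integer and $h(x)=\mathrm{sech}\big((2L+1)\,\mathrm{arcsech}(x)\big)$. Then $h$ is monotonically increasing and convex on the interval $(0,1)$. *)

theory Defs
  imports "HOL-Analysis.Analysis"
begin

definition sech :: "real \<Rightarrow> real" where
  "sech x = 1 / cosh x"

definition arcsech :: "real \<Rightarrow> real" where
  "arcsech x = arcosh (1 / x)"

end

theory Submission
  imports Defs
begin

text \<open>
  Put \<open>x = sech t\<close> with \<open>t > 0\<close> and \<open>n = 2L + 1\<close>, and let \<open>\<phi> = sinh / cosh\<^sup>2 = - sech'\<close>.
  By the chain rule \<open>h'(x) = n \<phi>(n t) / \<phi>(t)\<close>, which is positive, so \<open>h\<close> is increasing.
  As \<open>t\<close> decreases when \<open>x\<close> increases, convexity amounts to \<open>\<phi>(n t) / \<phi>(t)\<close> being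
  decreasing in \<open>t\<close>. The logarithmic derivative of this ratio is \<open>(E(n t) - E(t)) / t\<close>,
  where \<open>E(s) = s \<phi>'(s) / \<phi>(s) = s coth s - 2 s tanh s\<close> is the elasticity of \<open>\<phi>\<close>, and \<open>E\<close>
  is decreasing on \<open>(0, \<infinity>)\<close> because \<open>sinh s \<le> s cosh s\<close>.
\<close>

lemma dilation_ratio_antitone:
  fixes \<phi> \<phi>' :: "real \<Rightarrow> real"
  assumes deriv: "\<And>s. s > 0 \<Longrightarrow> (\<phi> has_real_derivative \<phi>' s) (at s)"
    and pos: "\<And>s. s > 0 \<Longrightarrow> \<phi> s > 0"
    and elasticity_antitone: "\<And>s u. 0 < s \<Longrightarrow> s \<le> u \<Longrightarrow> u * \<phi>' u / \<phi> u \<le> s * \<phi>' s / \<phi> s"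
    and "c \<ge> 1" "0 < a" "a \<le> b"
  shows "\<phi> (c * b) / \<phi> b \<le> \<phi> (c * a) / \<phi> a"
proof -
  define G where "G t = ln (\<phi> (c * t)) - ln (\<phi> t)" for t
  have "G b \<le> G a"
  proof (rule DERIV_nonpos_imp_nonincreasing[OF \<open>a \<le> b\<close>])
    fix t assume "a \<le> t" "t \<le> b"
    with assms have t: "t > 0" "c * t > 0" "t \<le> c * t" by auto
    have "(G has_real_derivative \<phi>' (c * t) / \<phi> (c * t) * c - \<phi>' t / \<phi> t) (at t)"
      unfolding G_def[abs_def] using t
      by (auto intro!: derivative_eq_intros DERIV_chain2[OF deriv] simp: pos)
    moreover have "\<phi>' (c * t) / \<phi> (c * t) * c - \<phi>' t / \<phi> t
        = ((c * t) * \<phi>' (c * t) / \<phi> (c * t) - t * \<phi>' t / \<phi> t) / t"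
      using t by (simp add: field_simps)
    moreover have "(c * t) * \<phi>' (c * t) / \<phi> (c * t) \<le> t * \<phi>' t / \<phi> t"
      using elasticity_antitone t by blast
    ultimately show "\<exists>y. (G has_real_derivative y) (at t) \<and> y \<le> 0"
      using t by (auto simp: divide_nonpos_pos)
  qed
  moreover have pos_values: "\<phi> (c * a) > 0" "\<phi> a > 0" "\<phi> (c * b) > 0" "\<phi> b > 0"
    using assms by (auto intro!: pos)
  ultimately have "ln (\<phi> (c * b) / \<phi> b) \<le> ln (\<phi> (c * a) / \<phi> a)"
    by (simp add: G_def ln_div)
  then show ?thesis
    using pos_values by simp
qed

definition tanh_sech :: "real \<Rightarrow> real" where
  "tanh_sech s = sinh s / (cosh s)\<^sup>2"

lemma tanh_sech_pos: "s > 0 \<Longrightarrow> tanh_sech s > 0"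
  by (simp add: tanh_sech_def)

lemma has_real_derivative_sech: "(sech has_real_derivative - tanh_sech t) (at t)"
  unfolding sech_def[abs_def] tanh_sech_def
  by (auto intro!: derivative_eq_intros simp: power2_eq_square)

lemma has_real_derivative_tanh_sech:
  "(tanh_sech has_real_derivative ((cosh s)\<^sup>2 - 2 * (sinh s)\<^sup>2) / (cosh s)^3) (at s)"
  unfolding tanh_sech_def[abs_def]
  by (auto intro!: derivative_eq_intros simp: field_simps power2_eq_square power3_eq_cube)

definition tanh_sech_elasticity :: "real \<Rightarrow> real" where
  "tanh_sech_elasticity s = s * cosh s / sinh s - 2 * s * sinh s / cosh s"

lemma tanh_sech_elasticity_eq:
  "s > 0 \<Longrightarrow> s * (((cosh s)\<^sup>2 - 2 * (sinh s)\<^sup>2) / (cosh s)^3) / tanh_sech s = tanh_sech_elasticity s"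
  by (simp add: tanh_sech_def tanh_sech_elasticity_def field_simps power2_eq_square power3_eq_cube)

lemma sinh_le_mult_cosh:
  fixes s :: real
  assumes "s \<ge> 0"
  shows "sinh s \<le> s * cosh s"
proof -
  have "(\<lambda>u. u * cosh u - sinh u) 0 \<le> (\<lambda>u. u * cosh u - sinh u) s"
  proof (rule DERIV_nonneg_imp_nondecreasing[OF assms])
    fix u :: real assume "0 \<le> u"
    then show "\<exists>y. ((\<lambda>u. u * cosh u - sinh u) has_real_derivative y) (at u) \<and> 0 \<le> y"
      by (intro exI[of _ "u * sinh u"]) (auto intro!: derivative_eq_intros)
  qed
  then show ?thesis by simp
qed

lemma tanh_sech_elasticity_deriv_nonpos:
  fixes s :: real
  assumes "s > 0"
  shows "cosh s / sinh s - s / (sinh s)\<^sup>2 - 2 * sinh s / cosh s - 2 * s / (cosh s)\<^sup>2 \<le> 0"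
proof -
  define S C where "S = sinh s" and "C = cosh s"
  have S: "S > 0" and C: "C > 0" and CS: "C\<^sup>2 = 1 + S\<^sup>2"
    using assms by (simp_all add: S_def C_def cosh_square_eq)
  have le: "S \<le> s * C"
    using sinh_le_mult_cosh assms by (simp add: S_def C_def)
  have "C * (S * C^3 - s * C\<^sup>2 - 2 * S^3 * C - 2 * s * S\<^sup>2)
      = S * C\<^sup>2 * (C\<^sup>2 - 2 * S\<^sup>2) - s * C * (C\<^sup>2 + 2 * S\<^sup>2)"
    by (simp add: algebra_simps power2_eq_square power3_eq_cube)
  also have "\<dots> = S * (1 + S\<^sup>2) * (1 - S\<^sup>2) - s * C * (1 + 3 * S\<^sup>2)"
    by (simp add: CS)
  also have "\<dots> \<le> S * (1 + S\<^sup>2) * (1 - S\<^sup>2) - S * (1 + 3 * S\<^sup>2)"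
    using le by (simp add: mult_right_mono)
  also have "\<dots> = - (S^3 * (S\<^sup>2 + 3))"
    by (simp add: algebra_simps power2_eq_square power3_eq_cube)
  also have "\<dots> \<le> 0"
    using S by simp
  finally have numerator: "S * C^3 - s * C\<^sup>2 - 2 * S^3 * C - 2 * s * S\<^sup>2 \<le> 0"
    using C by (simp add: mult_le_0_iff)
  have "cosh s / sinh s - s / (sinh s)\<^sup>2 - 2 * sinh s / cosh s - 2 * s / (cosh s)\<^sup>2
      = (S * C^3 - s * C\<^sup>2 - 2 * S^3 * C - 2 * s * S\<^sup>2) / (S\<^sup>2 * C\<^sup>2)"
    using S C by (simp add: S_def [symmetric] C_def [symmetric] field_simps power2_eq_square power3_eq_cube)
  also have "\<dots> \<le> 0"
    using S C numerator by (intro divide_nonpos_pos) auto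
  finally show ?thesis .
qed

lemma tanh_sech_elasticity_antitone:
  assumes "0 < s" "s \<le> u"
  shows "tanh_sech_elasticity u \<le> tanh_sech_elasticity s"
proof (rule DERIV_nonpos_imp_nonincreasing[OF \<open>s \<le> u\<close>])
  fix t assume "s \<le> t"
  with assms have t: "t > 0" by simp
  then have "(tanh_sech_elasticity has_real_derivative
      cosh t / sinh t - t / (sinh t)\<^sup>2 - 2 * sinh t / cosh t - 2 * t / (cosh t)\<^sup>2) (at t)"
    unfolding tanh_sech_elasticity_def[abs_def]
    by (auto intro!: derivative_eq_intros simp: field_simps power2_eq_square)
       (use cosh_square_eq[of t] in algebra)
  then show "\<exists>y. (tanh_sech_elasticity has_real_derivative y) (at t) \<and> y \<le> 0"
    using tanh_sech_elasticity_deriv_nonpos[OF t] by blast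
qed

lemma arcsech_pos: "0 < x \<Longrightarrow> x < 1 \<Longrightarrow> arcsech x > 0"
  by (simp add: arcsech_def)

lemma arcsech_antitone:
  assumes "0 < x" "x \<le> y" "y \<le> 1"
  shows "arcsech y \<le> arcsech x"
proof -
  have "1 \<le> 1 / y" "1 / y \<le> 1 / x"
    using assms by (auto simp: field_simps)
  then show ?thesis
    by (simp add: arcsech_def not_less [symmetric])
qed

lemma has_real_derivative_arcsech:
  assumes "0 < x" "x < 1"
  shows "(arcsech has_real_derivative - 1 / tanh_sech (arcsech x)) (at x)"
proof -
  have "1 / x > 1"
    using assms by simp
  have "(arcsech has_real_derivative 1 / sqrt ((1 / x)\<^sup>2 - 1) * (- 1 / x\<^sup>2)) (at x)"
    unfolding arcsech_def[abs_def]
    by (rule DERIV_chain2[where g = "\<lambda>x. 1 / x",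
          OF arcosh_real_has_field_derivative[OF \<open>1 / x > 1\<close>, where A = UNIV]])
       (use assms in \<open>auto intro!: derivative_eq_intros simp: power2_eq_square\<close>)
  moreover have "1 / sqrt ((1 / x)\<^sup>2 - 1) * (- 1 / x\<^sup>2) = - 1 / tanh_sech (arcsech x)"
    using \<open>1 / x > 1\<close> by (simp add: tanh_sech_def arcsech_def sinh_arcosh_real field_simps)
  ultimately show ?thesis
    by simp
qed

lemma tanh_sech_dilation_ratio_antitone:
  assumes "c \<ge> 1" "0 < a" "a \<le> b"
  shows "tanh_sech (c * b) / tanh_sech b \<le> tanh_sech (c * a) / tanh_sech a"
proof (rule dilation_ratio_antitone[OF has_real_derivative_tanh_sech tanh_sech_pos _ assms])
  fix s u :: real assume "0 < s" "s \<le> u"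
  then show "u * (((cosh u)\<^sup>2 - 2 * (sinh u)\<^sup>2) / (cosh u)^3) / tanh_sech u
      \<le> s * (((cosh s)\<^sup>2 - 2 * (sinh s)\<^sup>2) / (cosh s)^3) / tanh_sech s"
    using tanh_sech_elasticity_antitone[OF \<open>0 < s\<close> \<open>s \<le> u\<close>] \<open>0 < s\<close> \<open>s \<le> u\<close>
    by (simp only: tanh_sech_elasticity_eq)
qed

lemma has_real_derivative_sech_mult_arcsech:
  assumes "0 < x" "x < 1"
  shows "((\<lambda>x. sech (c * arcsech x)) has_real_derivative
    c * (tanh_sech (c * arcsech x) / tanh_sech (arcsech x))) (at x)"
proof -
  have "- tanh_sech (c * arcsech x) * (c * (- 1 / tanh_sech (arcsech x)))
      = c * (tanh_sech (c * arcsech x) / tanh_sech (arcsech x))"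
    by simp
  then show ?thesis
    using DERIV_chain2[OF has_real_derivative_sech
        DERIV_cmult[OF has_real_derivative_arcsech[OF assms]]]
    by metis
qed

theorem proposition3:
  fixes L :: nat and h :: "real \<Rightarrow> real"
  assumes "L \<ge> 1"
    and "\<And>x. h x = sech ((2 * real L + 1) * arcsech x)"
  shows "mono_on {0<..<1} h \<and> convex_on {0<..<1} h"
proof -
  define n where "n = 2 * real L + 1"
  define h' where "h' x = n * (tanh_sech (n * arcsech x) / tanh_sech (arcsech x))" for x
  have "n \<ge> 1"
    by (simp add: n_def)
  have h_eq: "h = (\<lambda>x. sech (n * arcsech x))"
    using assms(2) by (simp add: n_def fun_eq_iff)
  have deriv: "(h has_real_derivative h' x) (at x)" if "x \<in> {0<..<1}" for x
    using has_real_derivative_sech_mult_arcsech that by (simp add: h_eq h'_def)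
  have h'_pos: "h' x > 0" if "x \<in> {0<..<1}" for x
    using that \<open>n \<ge> 1\<close> by (simp add: h'_def arcsech_pos tanh_sech_pos)
  have h'_mono: "h' x \<le> h' y" if "x \<in> {0<..<1}" "y \<in> {0<..<1}" "x \<le> y" for x y
    unfolding h'_def using that \<open>n \<ge> 1\<close>
    by (intro mult_left_mono tanh_sech_dilation_ratio_antitone) (auto simp: arcsech_pos arcsech_antitone)
  have "mono_on {0<..<1} h"
  proof (rule mono_onI)
    fix x y :: real assume "x \<in> {0<..<1}" "y \<in> {0<..<1}" "x \<le> y"
    show "h x \<le> h y"
    proof (rule DERIV_nonneg_imp_nondecreasing[OF \<open>x \<le> y\<close>])
      fix t assume "x \<le> t" "t \<le> y"
      with \<open>x \<in> {0<..<1}\<close> \<open>y \<in> {0<..<1}\<close> have "t \<in> {0<..<1}"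
        by auto
      then show "\<exists>d. (h has_real_derivative d) (at t) \<and> 0 \<le> d"
        using deriv h'_pos less_imp_le by blast
    qed
  qed
  moreover have "convex_on {0<..<1} h"
    using deriv h'_mono by (intro convex_on_realI[where f' = h']) auto
  ultimately show ?thesis ..
qed

end
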